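(* Let $f_1,\dots,f_n$ satisfy Assumption A1 and let $R:=\mathrm{diam}(\mathrm{Pareto}(F))$. Then for any $\beta\in\Delta^{n-1}$ and $x_\beta=x^*(\beta)$, \[\|\nabla F(x_\beta)^\top\|_{1,2}\le LR.\]
   Context: Assumption A1: each $f_i:\mathbb{R}^d\to\mathbb{R}$ is twice differentiable with $\mu\mathbf{I}\preceq\nabla^2 f_i\preceq L\mathbf{I}$, $0<\mu\le L$. $F=(f_1,\dots,f_n)$, $\nabla F(x)\in\mathbb{R}^{n\times d}$ its Jacobian (rows $\nabla f_i(x)^\top$), $\Delta^{n-1}$ the simplex, $x^*(\beta)=x_\beta=\operatorname{argmin}_x\sum_i\beta_if_i(x)$. $\mathrm{Pareto}(F)$ is the set of Pareto optimal points (equivalently $x$ with $\sum_i\beta_i\nabla f_i(x)=0$ for some $\beta\in\Delta^{n-1}$), diameter in $\ell_2$. $\|A\|_{1,2}:=\sup_{\|z\|_1=1}\|Az\|_2$. *)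

theory Defs
  imports "HOL-Analysis.Analysis"
begin

definition pareto_set :: "('i \<Rightarrow> 'a \<Rightarrow> real) \<Rightarrow> 'a set" where
  "pareto_set f = {x. \<not> (\<exists>y. (\<forall>i. f i y \<le> f i x) \<and> (\<exists>i. f i y < f i x))}"

definition norm_1_2 :: "(('i::finite \<Rightarrow> real) \<Rightarrow> 'a::real_normed_vector) \<Rightarrow> real" where
  "norm_1_2 A = Sup {norm (A z) | z. (\<Sum>i\<in>UNIV. \<bar>z i\<bar>) = 1}"

end

theory Submission
  imports Defs
begin

text \<open>Each \<open>f\<^sub>i\<close> is \<open>\<mu>\<close>-strongly convex and \<open>L\<close>-smooth, so it has a unique minimiser
\<open>m\<^sub>i\<close>, which is Pareto optimal, and smoothness gives \<open>\<parallel>\<nabla>f\<^sub>i(x)\<parallel> \<le> L \<parallel>x - m\<^sub>i\<parallel>\<close>. The weighted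
sum \<open>\<Sum>\<^sub>i \<beta>\<^sub>i f\<^sub>i\<close> is again strongly convex, so \<open>x\<^sub>\<beta>\<close> is its unique minimiser and therefore Pareto
optimal as well. Hence \<open>\<parallel>\<nabla>f\<^sub>i(x\<^sub>\<beta>)\<parallel> \<le> L \<parallel>x\<^sub>\<beta> - m\<^sub>i\<parallel> \<le> L R\<close> for every \<open>i\<close>, and the (1,2)-norm
of \<open>\<nabla>F(x\<^sub>\<beta>)\<^sup>T\<close> is at most the largest of these column norms. That \<open>R\<close> is finite, i.e. that
the Pareto set is bounded, holds because far away from all minimisers the direction towards
the origin decreases every \<open>f\<^sub>i\<close> at once.\<close>

locale strongly_convex_smooth =
  fixes \<phi> :: "'a::real_inner \<Rightarrow> real" and g :: "'a \<Rightarrow> 'a" and \<mu> L :: real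
  assumes mu_pos: "0 < \<mu>" and mu_le_L: "\<mu> \<le> L"
    and lower_bound: "\<phi> x + g x \<bullet> (y - x) + \<mu> / 2 * (norm (y - x))\<^sup>2 \<le> \<phi> y"
    and upper_bound: "\<phi> y \<le> \<phi> x + g x \<bullet> (y - x) + L / 2 * (norm (y - x))\<^sup>2"
begin

lemma L_pos: "0 < L"
  using mu_pos mu_le_L by simp

lemma gradient_step_decrease: "\<phi> (x - (1 / L) *\<^sub>R g x) \<le> \<phi> x - (norm (g x))\<^sup>2 / (2 * L)"
proof -
  have "\<phi> (x - (1 / L) *\<^sub>R g x)
      \<le> \<phi> x + g x \<bullet> (- (1 / L) *\<^sub>R g x) + L / 2 * (norm (- (1 / L) *\<^sub>R g x))\<^sup>2"
    using upper_bound[where x=x and y="x - (1 / L) *\<^sub>R g x"] by simp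
  also have "\<dots> = \<phi> x - (norm (g x))\<^sup>2 / (2 * L)"
    using L_pos by (simp add: power2_norm_eq_inner[symmetric] power2_eq_square field_simps)
  finally show ?thesis .
qed

lemma grad_eq_0_if_minimizer:
  assumes "\<And>y. \<phi> x\<^sub>0 \<le> \<phi> y"
  shows "g x\<^sub>0 = 0"
proof -
  have "\<phi> x\<^sub>0 \<le> \<phi> x\<^sub>0 - (norm (g x\<^sub>0))\<^sup>2 / (2 * L)"
    using assms[of "x\<^sub>0 - (1 / L) *\<^sub>R g x\<^sub>0"] gradient_step_decrease[of x\<^sub>0] by linarith
  then show ?thesis
    using L_pos by (simp add: divide_le_0_iff)
qed

lemma norm_grad_le_dist_minimizer:
  assumes "\<And>y. \<phi> x\<^sub>0 \<le> \<phi> y"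
  shows "norm (g x) \<le> L * dist x x\<^sub>0"
proof -
  have "\<phi> x\<^sub>0 \<le> \<phi> x - (norm (g x))\<^sup>2 / (2 * L)"
    using assms[of "x - (1 / L) *\<^sub>R g x"] gradient_step_decrease[of x] by linarith
  moreover have "\<phi> x \<le> \<phi> x\<^sub>0 + L / 2 * (dist x x\<^sub>0)\<^sup>2"
    using upper_bound[where x=x\<^sub>0 and y=x] grad_eq_0_if_minimizer[OF assms] by (simp add: dist_norm)
  ultimately have "(norm (g x))\<^sup>2 / (2 * L) \<le> L / 2 * (dist x x\<^sub>0)\<^sup>2"
    by linarith
  then have "(norm (g x))\<^sup>2 \<le> (L * dist x x\<^sub>0)\<^sup>2"
    using L_pos by (simp add: field_simps power2_eq_square)
  then show ?thesis
    by (rule power2_le_imp_le) (use L_pos in simp)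
qed

lemma minimizer_unique:
  assumes "\<And>y. \<phi> x\<^sub>0 \<le> \<phi> y" and "\<phi> x \<le> \<phi> x\<^sub>0"
  shows "x = x\<^sub>0"
proof -
  have "\<mu> / 2 * (norm (x - x\<^sub>0))\<^sup>2 \<le> 0"
    using lower_bound[of x\<^sub>0 x] grad_eq_0_if_minimizer[OF assms(1)] assms(2) by simp
  then show ?thesis
    using mu_pos by (simp add: mult_le_0_iff)
qed

text \<open>With \<open>r = \<parallel>x - x\<^sub>0\<parallel>\<close>, strong monotonicity gives \<open>g x \<bullet> (x - x\<^sub>0) \<ge> \<mu> r\<^sup>2\<close>, while smoothness
bounds \<open>\<bar>g x \<bullet> x\<^sub>0\<bar>\<close> by \<open>L r \<parallel>x\<^sub>0\<parallel>\<close>; the quadratic term wins once \<open>r\<close> is large.\<close>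
lemma inner_grad_pos_if_far_from_minimizer:
  assumes min: "\<And>y. \<phi> x\<^sub>0 \<le> \<phi> y" and far: "L / \<mu> * norm x\<^sub>0 < norm (x - x\<^sub>0)"
  shows "0 < g x \<bullet> x"
proof -
  define r where "r = norm (x - x\<^sub>0)"
  have "\<phi> x + g x \<bullet> (x\<^sub>0 - x) + \<mu> / 2 * r\<^sup>2 \<le> \<phi> x\<^sub>0"
    using lower_bound[of x x\<^sub>0] by (simp add: r_def norm_minus_commute)
  moreover have "\<phi> x\<^sub>0 + \<mu> / 2 * r\<^sup>2 \<le> \<phi> x"
    using lower_bound[of x\<^sub>0 x] grad_eq_0_if_minimizer[OF min] by (simp add: r_def)
  ultimately have monotone: "\<mu> * r\<^sup>2 \<le> g x \<bullet> (x - x\<^sub>0)"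
    by (simp add: inner_diff_right)
  have "0 \<le> L / \<mu> * norm x\<^sub>0"
    using L_pos mu_pos by simp
  then have r_pos: "0 < r"
    using far unfolding r_def by linarith
  have cauchy_schwarz: "- (L * r * norm x\<^sub>0) \<le> g x \<bullet> x\<^sub>0"
    using Cauchy_Schwarz_ineq2[of "g x" x\<^sub>0] norm_grad_le_dist_minimizer[OF min, of x]
      mult_right_mono[of "norm (g x)" "L * r" "norm x\<^sub>0"]
    by (simp add: r_def dist_norm abs_le_iff)
  have "L * norm x\<^sub>0 < \<mu> * r"
    using far mu_pos by (simp add: r_def field_simps)
  then have "r * (L * norm x\<^sub>0) < r * (\<mu> * r)"
    using r_pos by simp
  then have "L * r * norm x\<^sub>0 < \<mu> * r\<^sup>2"
    by (simp add: power2_eq_square algebra_simps)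
  moreover have "g x \<bullet> x = g x \<bullet> (x - x\<^sub>0) + g x \<bullet> x\<^sub>0"
    by (simp add: inner_diff_right)
  ultimately show ?thesis
    using monotone cauchy_schwarz by linarith
qed

end

lemma taylor_second_order_segment:
  fixes f :: "'a::real_inner \<Rightarrow> real"
  assumes f': "\<And>x. (f has_derivative (\<lambda>h. g x \<bullet> h)) (at x)"
    and g': "\<And>x. (g has_derivative H x) (at x)"
  shows "\<exists>t. 0 < t \<and> t < 1 \<and>
    f y = f x + g x \<bullet> (y - x) + (y - x) \<bullet> H (x + t *\<^sub>R (y - x)) (y - x) / 2"
proof -
  define d where "d = y - x"
  define diff where "diff m = (if m = 0 then (\<lambda>t. f (x + t *\<^sub>R d))
      else if m = 1 then (\<lambda>t. g (x + t *\<^sub>R d) \<bullet> d) else (\<lambda>t. d \<bullet> H (x + t *\<^sub>R d) d))"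
    for m :: nat
  have segment: "((\<lambda>t. x + t *\<^sub>R d) has_derivative (\<lambda>s. s *\<^sub>R d)) (at t)" for t
    by (auto intro!: derivative_eq_intros)
  have "((\<lambda>t. f (x + t *\<^sub>R d)) has_derivative (\<lambda>s. g (x + t *\<^sub>R d) \<bullet> (s *\<^sub>R d))) (at t)" for t
    using has_derivative_compose[OF segment f'] .
  then have diff_1: "DERIV (diff 0) t :> diff 1 t" for t
    by (simp add: diff_def has_field_derivative_def mult_commute_abs)
  have "((\<lambda>t. g (x + t *\<^sub>R d) \<bullet> d) has_derivative (\<lambda>s. H (x + t *\<^sub>R d) (s *\<^sub>R d) \<bullet> d)) (at t)"
    for t
    using bounded_linear.has_derivative[OF bounded_linear_inner_left has_derivative_compose[OF segment g']] .
  moreover have "linear (H z)" for z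
    using g' has_derivative_linear by blast
  ultimately have diff_2: "DERIV (diff 1) t :> diff 2 t" for t
    by (simp add: diff_def has_field_derivative_def linear_scale inner_commute mult_commute_abs)
  have "\<exists>t. 0 < t \<and> t < 1 \<and> diff 0 1 = (\<Sum>m<2. diff m 0 / fact m * 1 ^ m) + diff 2 t / fact 2 * 1 ^ 2"
    by (rule Maclaurin) (use diff_1 diff_2 in \<open>auto simp: less_Suc_eq numeral_2_eq_2\<close>)
  then show ?thesis
    by (auto simp: diff_def d_def numeral_2_eq_2)
qed

lemma strongly_convex_smooth_if_hessian_bounds:
  fixes f :: "'a::real_inner \<Rightarrow> real"
  assumes "0 < \<mu>" "\<mu> \<le> L"
    and "\<And>x. (f has_derivative (\<lambda>h. g x \<bullet> h)) (at x)"
    and "\<And>x. (g has_derivative H x) (at x)"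
    and "\<And>x h. \<mu> * (norm h)\<^sup>2 \<le> h \<bullet> H x h"
    and "\<And>x h. h \<bullet> H x h \<le> L * (norm h)\<^sup>2"
  shows "strongly_convex_smooth f g \<mu> L"
proof
  fix x y
  obtain t where "f y = f x + g x \<bullet> (y - x) + (y - x) \<bullet> H (x + t *\<^sub>R (y - x)) (y - x) / 2"
    using taylor_second_order_segment[OF assms(3,4)] by blast
  then show "f x + g x \<bullet> (y - x) + \<mu> / 2 * (norm (y - x))\<^sup>2 \<le> f y"
    and "f y \<le> f x + g x \<bullet> (y - x) + L / 2 * (norm (y - x))\<^sup>2"
    using assms(5,6)[where x="x + t *\<^sub>R (y - x)" and h="y - x"] by auto
qed (use assms(1,2) in auto)

lemma strongly_convex_smooth_convex_combination:
  assumes \<beta>_nonneg: "\<And>i. i \<in> I \<Longrightarrow> 0 \<le> \<beta> i" and \<beta>_sum: "sum \<beta> I = 1"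
    and scs: "\<And>i. i \<in> I \<Longrightarrow> strongly_convex_smooth (f i) (g i) \<mu> L"
  shows "strongly_convex_smooth (\<lambda>x. \<Sum>i\<in>I. \<beta> i * f i x) (\<lambda>x. \<Sum>i\<in>I. \<beta> i *\<^sub>R g i x) \<mu> L"
proof
  obtain i where "i \<in> I"
    using \<beta>_sum by fastforce
  then show "0 < \<mu>" "\<mu> \<le> L"
    using scs strongly_convex_smooth.mu_pos strongly_convex_smooth.mu_le_L by blast+
next
  fix x y
  have combine: "(\<Sum>i\<in>I. \<beta> i * (f i x + g i x \<bullet> (y - x) + c))
      = (\<Sum>i\<in>I. \<beta> i * f i x) + (\<Sum>i\<in>I. \<beta> i *\<^sub>R g i x) \<bullet> (y - x) + c" for c
  proof -
    have "(\<Sum>i\<in>I. \<beta> i * (f i x + g i x \<bullet> (y - x) + c))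
        = (\<Sum>i\<in>I. \<beta> i * f i x) + (\<Sum>i\<in>I. \<beta> i * (g i x \<bullet> (y - x))) + sum \<beta> I * c"
      by (simp add: distrib_left sum.distrib sum_distrib_right)
    then show ?thesis
      by (simp add: \<beta>_sum inner_sum_left)
  qed
  have "(\<Sum>i\<in>I. \<beta> i * (f i x + g i x \<bullet> (y - x) + \<mu> / 2 * (norm (y - x))\<^sup>2)) \<le> (\<Sum>i\<in>I. \<beta> i * f i y)"
    by (intro sum_mono mult_left_mono \<beta>_nonneg strongly_convex_smooth.lower_bound[OF scs])
  then show "(\<Sum>i\<in>I. \<beta> i * f i x) + (\<Sum>i\<in>I. \<beta> i *\<^sub>R g i x) \<bullet> (y - x) + \<mu> / 2 * (norm (y - x))\<^sup>2
      \<le> (\<Sum>i\<in>I. \<beta> i * f i y)"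
    by (simp only: combine)
  have "(\<Sum>i\<in>I. \<beta> i * f i y) \<le> (\<Sum>i\<in>I. \<beta> i * (f i x + g i x \<bullet> (y - x) + L / 2 * (norm (y - x))\<^sup>2))"
    by (intro sum_mono mult_left_mono \<beta>_nonneg strongly_convex_smooth.upper_bound[OF scs])
  then show "(\<Sum>i\<in>I. \<beta> i * f i y)
      \<le> (\<Sum>i\<in>I. \<beta> i * f i x) + (\<Sum>i\<in>I. \<beta> i *\<^sub>R g i x) \<bullet> (y - x) + L / 2 * (norm (y - x))\<^sup>2"
    by (simp only: combine)
qed

lemma strongly_convex_smooth_minimizer_exists:
  fixes \<phi> :: "'a::euclidean_space \<Rightarrow> real"
  assumes "strongly_convex_smooth \<phi> g \<mu> L" and "continuous_on UNIV \<phi>"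
  shows "\<exists>x\<^sub>0. \<forall>y. \<phi> x\<^sub>0 \<le> \<phi> y"
proof -
  interpret strongly_convex_smooth \<phi> g \<mu> L by fact
  \<comment> \<open>by the lower bound at \<open>0\<close>, \<open>\<phi> y \<ge> \<phi> 0\<close> as soon as \<open>\<parallel>y\<parallel> \<ge> r\<close>\<close>
  define r where "r = 2 * norm (g 0) / \<mu>"
  have "0 \<le> r"
    using mu_pos by (simp add: r_def)
  then obtain x\<^sub>0 where "x\<^sub>0 \<in> cball 0 r" and min_ball: "\<And>y. y \<in> cball 0 r \<Longrightarrow> \<phi> x\<^sub>0 \<le> \<phi> y"
    using continuous_attains_inf[of "cball 0 r" \<phi>] continuous_on_subset[OF assms(2)] by force
  have "\<phi> x\<^sub>0 \<le> \<phi> y" if "r < norm y" for y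
  proof -
    have "norm (g 0) * norm y = \<mu> / 2 * r * norm y"
      using mu_pos by (simp add: r_def)
    also have "\<dots> \<le> \<mu> / 2 * (norm y)\<^sup>2"
      using that mu_pos mult_right_mono[of r "norm y" "norm y"] by (simp add: power2_eq_square)
    finally have "\<phi> 0 \<le> \<phi> 0 + g 0 \<bullet> y + \<mu> / 2 * (norm y)\<^sup>2"
      using Cauchy_Schwarz_ineq2[of "g 0" y] by (simp add: abs_le_iff)
    also have "\<dots> \<le> \<phi> y"
      using lower_bound[of 0 y] by simp
    finally show ?thesis
      using min_ball[of 0] \<open>0 \<le> r\<close> by simp
  qed
  then show ?thesis
    using min_ball by (metis mem_cball_0 not_le)
qed

lemma in_pareto_setI:
  assumes "\<And>y. \<forall>i. f i y \<le> f i x \<Longrightarrow> y = x"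
  shows "x \<in> pareto_set f"
proof -
  have "\<not> f i y < f i x" if "\<forall>i. f i y \<le> f i x" for y i
    using assms[OF that] by simp
  then show ?thesis
    unfolding pareto_set_def by blast
qed

lemma not_in_pareto_set_if_descent_direction:
  fixes f :: "'i::finite \<Rightarrow> 'a::real_normed_vector \<Rightarrow> real"
  assumes f': "\<And>i. (f i has_derivative D i) (at x)" and descent: "\<And>i. D i d < 0"
  shows "x \<notin> pareto_set f"
proof
  have "\<forall>\<^sub>F t in at_right 0. f i (x + t *\<^sub>R d) < f i x" for i
  proof -
    have "((\<lambda>t. x + t *\<^sub>R d) has_derivative (\<lambda>s. s *\<^sub>R d)) (at 0)"
      by (auto intro!: derivative_eq_intros)
    moreover have "(f i has_derivative D i) (at (x + 0 *\<^sub>R d))"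
      using f' by simp
    ultimately have "((\<lambda>t. f i (x + t *\<^sub>R d)) has_derivative (\<lambda>s. D i (s *\<^sub>R d))) (at 0)"
      by (rule has_derivative_compose)
    moreover have "linear (D i)"
      using f' has_derivative_linear by blast
    ultimately have deriv: "DERIV (\<lambda>t. f i (x + t *\<^sub>R d)) 0 :> D i d"
      by (simp add: has_field_derivative_def linear_scale mult_commute_abs)
    have "\<exists>\<delta>>0. \<forall>h>0. h < \<delta> \<longrightarrow> f i (x + h *\<^sub>R d) < f i x"
      using DERIV_neg_dec_right[OF deriv descent] by simp
    then show ?thesis
      by (auto simp: eventually_at_right_field)
  qed
  then have "\<forall>\<^sub>F t in at_right 0. \<forall>i. f i (x + t *\<^sub>R d) < f i x"
    by (rule eventually_all_finite)
  then obtain t where "\<forall>i. f i (x + t *\<^sub>R d) < f i x"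
    using eventually_happens'[OF trivial_limit_at_right_real] by blast
  moreover assume "x \<in> pareto_set f"
  ultimately show False
    unfolding pareto_set_def by (auto intro: less_imp_le)
qed

lemma bounded_pareto_set:
  fixes f :: "'i::finite \<Rightarrow> 'a::real_inner \<Rightarrow> real"
  assumes f': "\<And>i x. (f i has_derivative (\<lambda>h. g i x \<bullet> h)) (at x)"
    and scs: "\<And>i. strongly_convex_smooth (f i) (g i) \<mu> L"
    and min: "\<And>i y. f i (m i) \<le> f i y"
  shows "bounded (pareto_set f)"
proof -
  have ratio_nonneg: "0 \<le> L / \<mu>"
    using strongly_convex_smooth.mu_pos[OF scs] strongly_convex_smooth.L_pos[OF scs]
    by (simp add: less_imp_le)
  define M where "M = (\<Sum>i\<in>UNIV. (1 + L / \<mu>) * norm (m i))"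
  have M_ge: "(1 + L / \<mu>) * norm (m i) \<le> M" for i
    unfolding M_def using ratio_nonneg by (intro member_le_sum) auto
  have "x \<notin> pareto_set f" if "M < norm x" for x
  proof (rule not_in_pareto_set_if_descent_direction[OF f'])
    fix i
    have "norm x \<le> norm (x - m i) + norm (m i)"
      using norm_triangle_ineq[of "x - m i" "m i"] by simp
    then have "L / \<mu> * norm (m i) < norm (x - m i)"
      using M_ge[of i] that by (simp add: algebra_simps)
    then have "0 < g i x \<bullet> x"
      using strongly_convex_smooth.inner_grad_pos_if_far_from_minimizer[OF scs min] by blast
    then show "g i x \<bullet> - x < 0"
      by simp
  qed
  then show ?thesis
    unfolding bounded_iff by (meson not_le)
qed

lemma norm_1_2_le:
  fixes v :: "'i::finite \<Rightarrow> 'a::real_normed_vector"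
  assumes "\<And>i. norm (v i) \<le> C"
  shows "norm_1_2 (\<lambda>z. \<Sum>i\<in>UNIV. z i *\<^sub>R v i) \<le> C"
  unfolding norm_1_2_def
proof (rule cSup_least)
  define e :: "'i \<Rightarrow> real" where "e j = (if j = undefined then 1 else 0)" for j
  have "(\<Sum>i\<in>UNIV. \<bar>e i\<bar>) = 1"
    by (simp add: e_def if_distrib cong: if_cong)
  then show "{norm (\<Sum>i\<in>UNIV. z i *\<^sub>R v i) | z. (\<Sum>i\<in>UNIV. \<bar>z i\<bar>) = 1} \<noteq> {}"
    by blast
next
  fix s
  assume "s \<in> {norm (\<Sum>i\<in>UNIV. z i *\<^sub>R v i) | z. (\<Sum>i\<in>UNIV. \<bar>z i\<bar>) = 1}"
  then obtain z where s: "s = norm (\<Sum>i\<in>UNIV. z i *\<^sub>R v i)" and z: "(\<Sum>i\<in>UNIV. \<bar>z i\<bar>) = 1"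
    by blast
  have "s \<le> (\<Sum>i\<in>UNIV. norm (z i *\<^sub>R v i))"
    unfolding s by (rule norm_sum)
  also have "\<dots> = (\<Sum>i\<in>UNIV. \<bar>z i\<bar> * norm (v i))"
    by simp
  also have "\<dots> \<le> (\<Sum>i\<in>UNIV. \<bar>z i\<bar> * C)"
    by (intro sum_mono mult_left_mono assms) simp
  also have "\<dots> = C"
    by (simp flip: sum_distrib_right add: z)
  finally show "s \<le> C" .
qed

theorem lemma10:
  fixes f :: "'i::finite \<Rightarrow> 'a::euclidean_space \<Rightarrow> real"
    and grad :: "'i \<Rightarrow> 'a \<Rightarrow> 'a"
    and hess :: "'i \<Rightarrow> 'a \<Rightarrow> 'a \<Rightarrow> 'a"
    and \<mu> L :: real
    and \<beta> :: "'i \<Rightarrow> real"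
    and x\<beta> :: 'a
  assumes mu_pos: "0 < \<mu>" and mu_le_L: "\<mu> \<le> L"
    and grad: "\<And>i x. (f i has_derivative (\<lambda>h. grad i x \<bullet> h)) (at x)"
    and hess: "\<And>i x. (grad i has_derivative hess i x) (at x)"
    and hess_lower: "\<And>i x h. \<mu> * (norm h)\<^sup>2 \<le> h \<bullet> hess i x h"
    and hess_upper: "\<And>i x h. h \<bullet> hess i x h \<le> L * (norm h)\<^sup>2"
    and beta_nonneg: "\<And>i. 0 \<le> \<beta> i" and beta_sum: "(\<Sum>i\<in>UNIV. \<beta> i) = 1"
    and x\<beta>_min: "\<And>y. (\<Sum>i\<in>UNIV. \<beta> i * f i x\<beta>) \<le> (\<Sum>i\<in>UNIV. \<beta> i * f i y)"
  shows "norm_1_2 (\<lambda>z. \<Sum>i\<in>UNIV. z i *\<^sub>R grad i x\<beta>) \<le> L * diameter (pareto_set f)"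
proof -
  have scs: "strongly_convex_smooth (f i) (grad i) \<mu> L" for i
    using strongly_convex_smooth_if_hessian_bounds[OF mu_pos mu_le_L grad hess hess_lower hess_upper] .
  have "\<exists>m. \<forall>y. f i m \<le> f i y" for i
    using strongly_convex_smooth_minimizer_exists[OF scs] has_derivative_continuous[OF grad]
    by (simp add: continuous_at_imp_continuous_on)
  then obtain m where min: "\<And>i y. f i (m i) \<le> f i y"
    by metis
  have m_pareto: "m i \<in> pareto_set f" for i
    using strongly_convex_smooth.minimizer_unique[OF scs min] by (blast intro: in_pareto_setI)
  interpret weighted: strongly_convex_smooth
      "\<lambda>x. \<Sum>i\<in>UNIV. \<beta> i * f i x" "\<lambda>x. \<Sum>i\<in>UNIV. \<beta> i *\<^sub>R grad i x" \<mu> L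
    using strongly_convex_smooth_convex_combination[OF beta_nonneg beta_sum scs] by simp
  have x\<beta>_pareto: "x\<beta> \<in> pareto_set f"
  proof (rule in_pareto_setI)
    fix y
    assume "\<forall>i. f i y \<le> f i x\<beta>"
    then have "(\<Sum>i\<in>UNIV. \<beta> i * f i y) \<le> (\<Sum>i\<in>UNIV. \<beta> i * f i x\<beta>)"
      by (intro sum_mono mult_left_mono beta_nonneg) auto
    then show "y = x\<beta>"
      by (rule weighted.minimizer_unique[OF x\<beta>_min])
  qed
  \<comment> \<open>\<open>diameter\<close> is \<open>0\<close> on unbounded sets, so boundedness is needed to use it as a bound\<close>
  have bounded: "bounded (pareto_set f)"
    by (rule bounded_pareto_set[OF grad scs min])
  have "norm (grad i x\<beta>) \<le> L * diameter (pareto_set f)" for i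
  proof -
    have "norm (grad i x\<beta>) \<le> L * dist x\<beta> (m i)"
      by (rule strongly_convex_smooth.norm_grad_le_dist_minimizer[OF scs min])
    also have "\<dots> \<le> L * diameter (pareto_set f)"
      using diameter_bounded_bound[OF bounded x\<beta>_pareto m_pareto] weighted.L_pos by simp
    finally show ?thesis .
  qed
  then show ?thesis
    by (rule norm_1_2_le)
qed

end
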